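(* Let $k\ge 2$ and let $\mathcal{T}_k$ be the graph with vertex set $\{a_1,\ldots,a_{k-1},b_1,\ldots,b_k,c_1,\ldots,c_{k-1},d_1,\ldots,d_{2k-3}\}$ whose edges are exactly: all pairs of distinct vertices in $\{a_1,\ldots,a_{k-1},b_1,\ldots,b_k\}$ (a clique $K_{2k-1}$); all pairs $b_ic_j$ ($1\le i\le k$, $1\le j\le k-1$); all pairs $c_id_j$ ($1\le i\le k-1$, $1\le j\le 2k-3$); the pairs $a_id_j$ for $1\le i\le k-1$ and $i\le j\le k-1$; and the pairs $b_id_j$ for $3\le i\le k$ and $k\le j\le k+i-3$. Then $\mathcal{T}_k$ is uniquely $k$-list colorable.
   Context: All graphs are finite, simple and undirected. A list assignment $L$ for a graph $G$ assigns to each vertex $v$ a set $L(v)$ of colors; an $L$-coloring is a proper vertex coloring $c$ of $G$ with $c(v)\in L(v)$ for every vertex $v$. A $k$-list assignment is a list assignment with $|L(v)|=k$ for all $v$. $G$ is uniquely $k$-list colorable (U$k$LC) if there exists a $k$-list assignment $L$ such that $G$ has exactly one $L$-coloring. *)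

theory Defs
  imports Main
begin

(* A finite simple graph given by a vertex set V and a symmetric irreflexive edge
   relation E (only edges between vertices of V matter). *)

definition L_coloring :: "'v set \<Rightarrow> ('v \<Rightarrow> 'v \<Rightarrow> bool) \<Rightarrow> ('v \<Rightarrow> 'c set) \<Rightarrow> ('v \<Rightarrow> 'c) \<Rightarrow> bool" where
  "L_coloring V E L c \<longleftrightarrow>
     (\<forall>v\<in>V. c v \<in> L v) \<and> (\<forall>u\<in>V. \<forall>v\<in>V. E u v \<longrightarrow> c u \<noteq> c v)"

definition uniquely_list_colorable :: "nat \<Rightarrow> 'v set \<Rightarrow> ('v \<Rightarrow> 'v \<Rightarrow> bool) \<Rightarrow> bool" where
  "uniquely_list_colorable k V E \<longleftrightarrow>
     (\<exists>L :: 'v \<Rightarrow> nat set. (\<forall>v\<in>V. finite (L v) \<and> card (L v) = k) \<and>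
        (\<exists>c. L_coloring V E L c \<and>
           (\<forall>c'. L_coloring V E L c' \<longrightarrow> (\<forall>v\<in>V. c' v = c v))))"

datatype tvert = A nat | B nat | C nat | D nat

definition T_vertices :: "nat \<Rightarrow> tvert set" where
  "T_vertices k = A ` {1..k-1} \<union> B ` {1..k} \<union> C ` {1..k-1} \<union> D ` {1..2*k-3}"

fun T_arc :: "nat \<Rightarrow> tvert \<Rightarrow> tvert \<Rightarrow> bool" where
  "T_arc k (A i) (A j) = (i \<noteq> j)"
| "T_arc k (B i) (B j) = (i \<noteq> j)"
| "T_arc k (A i) (B j) = True"
| "T_arc k (B i) (C j) = True"
| "T_arc k (C i) (D j) = True"
| "T_arc k (A i) (D j) = (i \<le> j \<and> j \<le> k - 1)"
| "T_arc k (B i) (D j) = (3 \<le> i \<and> k \<le> j \<and> j + 3 \<le> k + i)"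
| "T_arc k _ _ = False"

definition T_edge :: "nat \<Rightarrow> tvert \<Rightarrow> tvert \<Rightarrow> bool" where
  "T_edge k u v \<longleftrightarrow> u \<in> T_vertices k \<and> v \<in> T_vertices k \<and> (T_arc k u v \<or> T_arc k v u)"

end

theory Submission
  imports Defs
begin

(* With the lists T_list, the clique A_1, ..., A_(k-1), B_1 must use all of the colours
   1, ..., k. Every other vertex has exactly one colour in its list that is not already
   used by a neighbour: B_i (i >= 2) is forced to k+i-1 by that clique, C_j to 2k+j by the
   B_i, and D_j to min(j+1, k) by the C_j. Then A_i = i by induction on i, since a colour
   x < i is taken by A_x and a colour x > i by D_(x-1); finally B_1 is left with k. *)

lemma L_coloring_clique_image:
  assumes c: "L_coloring V E L c" and "X \<subseteq> V"
    and clique: "\<And>x y. x \<in> X \<Longrightarrow> y \<in> X \<Longrightarrow> x \<noteq> y \<Longrightarrow> E x y"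
    and lists: "\<And>x. x \<in> X \<Longrightarrow> L x \<subseteq> S" and "finite S" and "card X = card S"
  shows "c ` X = S"
proof (rule card_subset_eq)
  show "c ` X \<subseteq> S"
    using c lists \<open>X \<subseteq> V\<close> by (fastforce simp: L_coloring_def)
  have "inj_on c X"
    using c clique \<open>X \<subseteq> V\<close> by (fastforce simp: L_coloring_def inj_on_def)
  then show "card (c ` X) = card S"
    using \<open>card X = card S\<close> by (simp add: card_image)
qed fact

lemma L_coloring_forced:
  assumes c: "L_coloring V E L c" and "v \<in> V"
    and "L v \<subseteq> insert a (c ` {u \<in> V. E v u})"
  shows "c v = a"
  using assms unfolding L_coloring_def by blast

definition T_list :: "nat \<Rightarrow> tvert \<Rightarrow> nat set" where
  "T_list k v = (case v of
       A i \<Rightarrow> {1..k}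
     | B i \<Rightarrow> (if i = 1 then {1..k} else insert (k + i - 1) {1..k-1})
     | C j \<Rightarrow> insert (2*k + j) {k+1..2*k-1}
     | D j \<Rightarrow> insert (min (j + 1) k) {2*k+1..3*k-1})"

definition T_coloring :: "nat \<Rightarrow> tvert \<Rightarrow> nat" where
  "T_coloring k v = (case v of
       A i \<Rightarrow> i
     | B i \<Rightarrow> k + i - 1
     | C j \<Rightarrow> 2*k + j
     | D j \<Rightarrow> min (j + 1) k)"

lemma T_vertices_iff [simp]:
  "A i \<in> T_vertices k \<longleftrightarrow> 1 \<le> i \<and> i \<le> k - 1"
  "B i \<in> T_vertices k \<longleftrightarrow> 1 \<le> i \<and> i \<le> k"
  "C i \<in> T_vertices k \<longleftrightarrow> 1 \<le> i \<and> i \<le> k - 1"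
  "D i \<in> T_vertices k \<longleftrightarrow> 1 \<le> i \<and> i \<le> 2*k - 3"
  by (auto simp: T_vertices_def)

lemma card_T_list:
  assumes "2 \<le> k" "v \<in> T_vertices k"
  shows "finite (T_list k v) \<and> card (T_list k v) = k"
proof (cases v)
  case (B i)
  moreover have "k + i - 1 \<notin> {1..k-1}" if "i \<noteq> 1"
    using B assms that by auto
  ultimately show ?thesis
    using assms by (cases "i = 1") (auto simp: T_list_def card_insert_disjoint)
qed (use assms in \<open>auto simp: T_list_def\<close>)

lemma T_coloring_is_L_coloring:
  assumes "2 \<le> k"
  shows "L_coloring (T_vertices k) (T_edge k) (T_list k) (T_coloring k)"
  unfolding L_coloring_def
proof (intro conjI ballI impI)
  fix v assume "v \<in> T_vertices k"
  then show "T_coloring k v \<in> T_list k v"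
    using assms by (cases v) (auto simp: T_list_def T_coloring_def)
next
  fix u v assume "T_edge k u v"
  then show "T_coloring k u \<noteq> T_coloring k v"
    using assms by (cases u; cases v) (auto simp: T_edge_def T_coloring_def)
qed

context
  fixes k :: nat and c :: "tvert \<Rightarrow> nat"
  assumes k: "2 \<le> k" and c: "L_coloring (T_vertices k) (T_edge k) (T_list k) c"
begin

lemma T_clique_colors: "c ` insert (B 1) (A ` {1..k-1}) = {1..k}"
proof (rule L_coloring_clique_image[OF c])
  have "card (A ` {1..k-1}) = k - 1"
    by (simp add: card_image inj_on_def)
  then show "card (insert (B 1) (A ` {1..k-1})) = card {1..k}"
    using k by (simp add: card_insert_disjoint image_iff)
qed (use k in \<open>auto simp: T_edge_def T_list_def\<close>)

lemma T_color_B: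
  assumes "2 \<le> i" "i \<le> k"
  shows "c (B i) = k + i - 1"
proof (rule L_coloring_forced[OF c])
  have "{1..k-1} \<subseteq> c ` insert (B 1) (A ` {1..k-1})"
    unfolding T_clique_colors by auto
  also have "\<dots> \<subseteq> c ` {u \<in> T_vertices k. T_edge k (B i) u}"
    using assms by (intro image_mono) (auto simp: T_edge_def)
  finally show "T_list k (B i) \<subseteq> insert (k + i - 1) (c ` {u \<in> T_vertices k. T_edge k (B i) u})"
    using assms by (auto simp: T_list_def)
qed (use assms in simp)

lemma T_color_C:
  assumes "1 \<le> j" "j \<le> k - 1"
  shows "c (C j) = 2*k + j"
proof (rule L_coloring_forced[OF c])
  have "x \<in> c ` {u \<in> T_vertices k. T_edge k (C j) u}" if "x \<in> {k+1..2*k-1}" for x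
  proof
    show "x = c (B (x + 1 - k))"
      using that T_color_B[of "x + 1 - k"] by auto
  qed (use that assms k in \<open>auto simp: T_edge_def\<close>)
  then show "T_list k (C j) \<subseteq> insert (2*k + j) (c ` {u \<in> T_vertices k. T_edge k (C j) u})"
    by (auto simp: T_list_def)
qed (use assms in simp)

lemma T_color_D:
  assumes "1 \<le> j" "j \<le> 2*k - 3"
  shows "c (D j) = min (j + 1) k"
proof (rule L_coloring_forced[OF c])
  have "x \<in> c ` {u \<in> T_vertices k. T_edge k (D j) u}" if "x \<in> {2*k+1..3*k-1}" for x
  proof
    show "x = c (C (x - 2*k))"
      using that T_color_C[of "x - 2*k"] by auto
  qed (use that assms k in \<open>auto simp: T_edge_def\<close>)
  then show "T_list k (D j) \<subseteq> insert (min (j + 1) k) (c ` {u \<in> T_vertices k. T_edge k (D j) u})"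
    by (auto simp: T_list_def)
qed (use assms in simp)

lemma T_color_A:
  assumes "1 \<le> i" "i \<le> k - 1"
  shows "c (A i) = i"
  using assms
proof (induction i rule: less_induct)
  case (less i)
  have "x \<in> c ` {u \<in> T_vertices k. T_edge k (A i) u}" if "x \<in> {1..k}" "x \<noteq> i" for x
  proof (cases "x < i")
    case True
    show ?thesis
    proof
      show "x = c (A x)"
        using True that less by simp
    qed (use True that less in \<open>auto simp: T_edge_def\<close>)
  next
    case False
    show ?thesis
    proof
      show "x = c (D (x - 1))"
        using False that less k T_color_D[of "x - 1"] by simp
    qed (use False that less k in \<open>auto simp: T_edge_def\<close>)
  qed
  then show ?case
    using less.prems by (intro L_coloring_forced[OF c]) (force simp: T_list_def)+
qed

lemma T_color_B1: "c (B 1) = k"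
proof (rule L_coloring_forced[OF c])
  have "x \<in> c ` {u \<in> T_vertices k. T_edge k (B 1) u}" if "x \<in> {1..k-1}" for x
  proof
    show "x = c (A x)"
      using that T_color_A by simp
  qed (use that k in \<open>auto simp: T_edge_def\<close>)
  then show "T_list k (B 1) \<subseteq> insert k (c ` {u \<in> T_vertices k. T_edge k (B 1) u})"
    by (force simp: T_list_def)
qed (use k in simp)

lemma T_L_coloring_unique:
  assumes "v \<in> T_vertices k"
  shows "c v = T_coloring k v"
proof (cases v)
  case (B i)
  then show ?thesis
    using assms T_color_B T_color_B1 by (cases "i = 1") (simp_all add: T_coloring_def)
qed (use assms T_color_A T_color_C T_color_D in \<open>simp_all add: T_coloring_def\<close>)

end

theorem mainTheorem19:
  fixes k :: nat
  assumes "k \<ge> 2"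
  shows "uniquely_list_colorable k (T_vertices k) (T_edge k)"
  unfolding uniquely_list_colorable_def
proof (intro exI conjI ballI allI impI)
  show "finite (T_list k v)" "card (T_list k v) = k" if "v \<in> T_vertices k" for v
    using card_T_list assms that by auto
  show "L_coloring (T_vertices k) (T_edge k) (T_list k) (T_coloring k)"
    using T_coloring_is_L_coloring assms .
  show "c v = T_coloring k v"
    if "L_coloring (T_vertices k) (T_edge k) (T_list k) c" "v \<in> T_vertices k" for c v
    using T_L_coloring_unique assms that .
qed

end
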